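(* Every bridged graph satisfies the triangle diamond condition $(TDC)$; consequently every bridged graph is a diamond-weakly modular graph.
   Context: All graphs are finite, simple and connected; $d$ denotes the shortest-path distance. A graph is bridged if it has no isometric cycle of length greater than $3$. A diamond is $K_4$ minus one edge. Triangle diamond condition $(TDC)$: for any three vertices $u,v,w$ with $1=d(v,w)<d(u,v)=d(u,w)$, there exists a common neighbor $z$ of $v$ and $w$ with $d(u,z)=d(u,v)-1$ such that $z$ is adjacent to every vertex $x$ with $d(x,v)=1$, $d(u,x)=d(u,v)-1$ and to every vertex $y$ with $d(y,w)=1$, $d(u,y)=d(u,w)-1$ (so that $v,w,z$ form diamonds with such $x$ and $y$). Quadrangle condition $(QC)$: for any four vertices $u,v,w,y$ with $d(v,y)=d(w,y)=1$ and $2=d(v,w)\le d(u,v)=d(u,w)=d(u,y)-1$, there exists a common neighbor $z$ of $v$ and $w$ with $d(u,z)=d(u,v)-1$. A graph is diamond-weakly modular if its distance function satisfies $(QC)$ and $(TDC)$. *)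

theory Defs
  imports Main
begin

definition simple_graph :: "'a set \<Rightarrow> ('a \<Rightarrow> 'a \<Rightarrow> bool) \<Rightarrow> bool" where
  "simple_graph V E \<longleftrightarrow> finite V \<and> (\<forall>x y. E x y \<longrightarrow> x \<in> V \<and> y \<in> V)
     \<and> (\<forall>x y. E x y \<longrightarrow> E y x) \<and> (\<forall>x. \<not> E x x)"

definition walk :: "'a set \<Rightarrow> ('a \<Rightarrow> 'a \<Rightarrow> bool) \<Rightarrow> 'a list \<Rightarrow> bool" where
  "walk V E xs \<longleftrightarrow> xs \<noteq> [] \<and> set xs \<subseteq> V \<and> (\<forall>i. Suc i < length xs \<longrightarrow> E (xs ! i) (xs ! Suc i))"

definition connected_graph :: "'a set \<Rightarrow> ('a \<Rightarrow> 'a \<Rightarrow> bool) \<Rightarrow> bool" where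
  "connected_graph V E \<longleftrightarrow> (\<forall>u\<in>V. \<forall>v\<in>V. \<exists>xs. walk V E xs \<and> hd xs = u \<and> last xs = v)"

definition gdist :: "'a set \<Rightarrow> ('a \<Rightarrow> 'a \<Rightarrow> bool) \<Rightarrow> 'a \<Rightarrow> 'a \<Rightarrow> nat" where
  "gdist V E u v = (LEAST n. \<exists>xs. walk V E xs \<and> hd xs = u \<and> last xs = v \<and> length xs = Suc n)"

definition isometric_cycle :: "'a set \<Rightarrow> ('a \<Rightarrow> 'a \<Rightarrow> bool) \<Rightarrow> 'a list \<Rightarrow> bool" where
  "isometric_cycle V E cs \<longleftrightarrow> length cs \<ge> 3 \<and> distinct cs \<and> set cs \<subseteq> V
     \<and> (\<forall>i < length cs. E (cs ! i) (cs ! ((i + 1) mod length cs)))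
     \<and> (\<forall>i < length cs. \<forall>j < length cs.
          gdist V E (cs ! i) (cs ! j) =
            min (nat \<bar>int i - int j\<bar>) (length cs - nat \<bar>int i - int j\<bar>))"

definition bridged :: "'a set \<Rightarrow> ('a \<Rightarrow> 'a \<Rightarrow> bool) \<Rightarrow> bool" where
  "bridged V E \<longleftrightarrow> (\<forall>cs. isometric_cycle V E cs \<longrightarrow> length cs \<le> 3)"

definition TDC :: "'a set \<Rightarrow> ('a \<Rightarrow> 'a \<Rightarrow> bool) \<Rightarrow> bool" where
  "TDC V E \<longleftrightarrow> (\<forall>u\<in>V. \<forall>v\<in>V. \<forall>w\<in>V.
     (1 = gdist V E v w \<and> gdist V E v w < gdist V E u v \<and> gdist V E u v = gdist V E u w) \<longrightarrow>
     (\<exists>z\<in>V. E z v \<and> E z w \<and> gdist V E u z = gdist V E u v - 1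
        \<and> (\<forall>x\<in>V. gdist V E x v = 1 \<and> gdist V E u x = gdist V E u v - 1 \<and> x \<noteq> z \<longrightarrow> E z x)
        \<and> (\<forall>y\<in>V. gdist V E y w = 1 \<and> gdist V E u y = gdist V E u w - 1 \<and> y \<noteq> z \<longrightarrow> E z y)))"

definition QC :: "'a set \<Rightarrow> ('a \<Rightarrow> 'a \<Rightarrow> bool) \<Rightarrow> bool" where
  "QC V E \<longleftrightarrow> (\<forall>u\<in>V. \<forall>v\<in>V. \<forall>w\<in>V. \<forall>y\<in>V.
     (gdist V E v y = 1 \<and> gdist V E w y = 1 \<and> 2 = gdist V E v w \<and> gdist V E v w \<le> gdist V E u v
      \<and> gdist V E u v = gdist V E u w \<and> gdist V E u w = gdist V E u y - 1) \<longrightarrow>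
     (\<exists>z\<in>V. E z v \<and> E z w \<and> gdist V E u z = gdist V E u v - 1))"

definition diamond_weakly_modular :: "'a set \<Rightarrow> ('a \<Rightarrow> 'a \<Rightarrow> bool) \<Rightarrow> bool" where
  "diamond_weakly_modular V E \<longleftrightarrow> QC V E \<and> TDC V E"

end

(*
  Fix u and write S_k for the sphere of radius k around u. Two local conditions are shown by
  induction on the length of the cycle that a counterexample would produce: the triangle
  condition (adjacent v, w in S_k have a common neighbour in S_(k-1)) and the convexity of balls
  (two vertices of S_k with a common neighbour in S_(k+1) are equal or adjacent). Given a
  counterexample of minimal size, take geodesics from u to its two vertices; the two conditions
  for smaller sizes determine every distance between a vertex of one geodesic and a vertex of
  the other, and these are exactly the distances along a cycle of length 2k + 1, resp. 2k + 2.
  So the two geodesics span an isometric cycle of length at least 4, which a bridged graph does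
  not have. The common neighbour z given by the triangle condition is then the vertex required
  by TDC, since convexity of balls makes every other neighbour of v or w in S_(k-1) adjacent
  to z; and convexity of balls also shows that the hypothesis of QC is never met.
*)

theory Submission
  imports Defs
begin

(* Runs along a from a 0 to a \<alpha>, then back along b from b (n - \<alpha> - 1) to b 1; for a 0 = b 0 this
  closes up to a cycle of length n. *)
definition cycle_of_paths :: "(nat \<Rightarrow> 'a) \<Rightarrow> (nat \<Rightarrow> 'a) \<Rightarrow> nat \<Rightarrow> nat \<Rightarrow> nat \<Rightarrow> 'a" where
  "cycle_of_paths a b \<alpha> n i = (if i \<le> \<alpha> then a i else b (n - i))"

locale connected_simple_graph =
  fixes V :: "'a set" and E :: "'a \<Rightarrow> 'a \<Rightarrow> bool"
  assumes simple: "simple_graph V E" and connected: "connected_graph V E"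
begin

abbreviation d :: "'a \<Rightarrow> 'a \<Rightarrow> nat" where "d \<equiv> gdist V E"

lemma edge_in_V: "E x y \<Longrightarrow> x \<in> V" "E x y \<Longrightarrow> y \<in> V"
  using simple unfolding simple_graph_def by blast+

lemma edge_sym: "E x y \<Longrightarrow> E y x"
  using simple unfolding simple_graph_def by blast

lemma edge_irrefl: "\<not> E x x"
  using simple unfolding simple_graph_def by blast

lemma walk_Nil [simp]: "\<not> walk V E []"
  by (simp add: walk_def)

lemma walk_singleton [simp]: "walk V E [x] \<longleftrightarrow> x \<in> V"
  by (simp add: walk_def)

lemma walk_Cons_Cons [simp]: "walk V E (x # y # xs) \<longleftrightarrow> E x y \<and> walk V E (y # xs)"
proof
  assume w: "walk V E (x # y # xs)"
  have "E ((x # y # xs) ! 0) ((x # y # xs) ! Suc 0)"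
    using w unfolding walk_def by (metis length_Cons zero_less_Suc Suc_less_eq)
  moreover have "walk V E (y # xs)" unfolding walk_def
  proof (intro conjI allI impI)
    show "set (y # xs) \<subseteq> V" using w unfolding walk_def by auto
    fix i assume "Suc i < length (y # xs)"
    then have "Suc (Suc i) < length (x # y # xs)" by simp
    then have "E ((x # y # xs) ! Suc i) ((x # y # xs) ! Suc (Suc i))"
      using w unfolding walk_def by blast
    then show "E ((y # xs) ! i) ((y # xs) ! Suc i)" by simp
  qed simp
  ultimately show "E x y \<and> walk V E (y # xs)" by simp
next
  assume h: "E x y \<and> walk V E (y # xs)"
  show "walk V E (x # y # xs)" unfolding walk_def
  proof (intro conjI allI impI)
    show "set (x # y # xs) \<subseteq> V" using h edge_in_V unfolding walk_def by auto
    fix i assume i: "Suc i < length (x # y # xs)"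
    show "E ((x # y # xs) ! i) ((x # y # xs) ! Suc i)"
    proof (cases i)
      case (Suc j)
      then show ?thesis using h i unfolding walk_def by auto
    qed (use h in simp)
  qed simp
qed

lemma walk_append: "walk V E xs \<Longrightarrow> walk V E ys \<Longrightarrow> E (last xs) (hd ys) \<Longrightarrow> walk V E (xs @ ys)"
proof (induction xs rule: induct_list012)
  case (2 x) then show ?case by (cases ys) auto
qed auto

lemma walk_rev: "walk V E xs \<Longrightarrow> walk V E (rev xs)"
proof (induction xs rule: induct_list012)
  case (3 x y zs)
  then have "walk V E (rev (y # zs) @ [x])"
    using edge_sym edge_in_V by (intro walk_append) auto
  then show ?case by simp
qed auto

lemma dist_lt_length: "walk V E xs \<Longrightarrow> d (hd xs) (last xs) < length xs"
proof -
  assume w: "walk V E xs"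
  then have "length xs = Suc (length xs - 1)" by (cases xs) auto
  then have "d (hd xs) (last xs) \<le> length xs - 1"
    unfolding gdist_def using w by (intro Least_le) metis
  then show ?thesis using w by (cases xs) auto
qed

lemma shortest_walk:
  assumes "u \<in> V" "v \<in> V"
  shows "\<exists>xs. walk V E xs \<and> hd xs = u \<and> last xs = v \<and> length xs = Suc (d u v)"
proof -
  obtain xs where "walk V E xs" "hd xs = u" "last xs = v"
    using assms connected unfolding connected_graph_def by blast
  then have "\<exists>n xs. walk V E xs \<and> hd xs = u \<and> last xs = v \<and> length xs = Suc n"
    by (metis Suc_pred length_greater_0_conv walk_Nil)
  then show ?thesis unfolding gdist_def by (rule LeastI_ex)
qed

lemma dist_self [simp]: "u \<in> V \<Longrightarrow> d u u = 0"
  using dist_lt_length[of "[u]"] by simp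

lemma dist_eq_0: "u \<in> V \<Longrightarrow> v \<in> V \<Longrightarrow> d u v = 0 \<Longrightarrow> u = v"
  using shortest_walk[of u v] by (force simp: length_Suc_conv)

lemma dist_commute: "u \<in> V \<Longrightarrow> v \<in> V \<Longrightarrow> d u v = d v u"
proof -
  have le: "d b a \<le> d a b" if ab: "a \<in> V" "b \<in> V" for a b
  proof -
    obtain xs where xs: "walk V E xs" "hd xs = a" "last xs = b" "length xs = Suc (d a b)"
      using shortest_walk[OF ab] by blast
    then have "d (hd (rev xs)) (last (rev xs)) < length (rev xs)"
      using walk_rev dist_lt_length by blast
    then show ?thesis using xs by (cases xs) (auto simp: last_rev hd_rev)
  qed
  assume "u \<in> V" "v \<in> V"
  then show ?thesis using le[of u v] le[of v u] by simp
qed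

lemma dist_triangle: "u \<in> V \<Longrightarrow> v \<in> V \<Longrightarrow> w \<in> V \<Longrightarrow> d u w \<le> d u v + d v w"
proof -
  assume uvw: "u \<in> V" "v \<in> V" "w \<in> V"
  obtain xs where xs: "walk V E xs" "hd xs = u" "last xs = v" "length xs = Suc (d u v)"
    using shortest_walk uvw by blast
  obtain ys where ys: "walk V E ys" "hd ys = v" "last ys = w" "length ys = Suc (d v w)"
    using shortest_walk uvw by blast
  show ?thesis
  proof (cases "tl ys")
    case Nil
    then show ?thesis using ys by (cases ys) auto
  next
    case (Cons y ys')
    then have ys_eq: "ys = v # y # ys'" using ys by (cases ys) auto
    then have "walk V E (xs @ y # ys')" using xs ys by (intro walk_append) auto
    then have "d (hd (xs @ y # ys')) (last (xs @ y # ys')) < length (xs @ y # ys')"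
      by (rule dist_lt_length)
    then show ?thesis using xs ys ys_eq by (cases xs) auto
  qed
qed

lemma dist_edge: "E u v \<Longrightarrow> d u v = 1"
proof -
  assume e: "E u v"
  then have "d u v < 2" using dist_lt_length[of "[u, v]"] edge_in_V by simp
  moreover have "d u v \<noteq> 0" using dist_eq_0 e edge_in_V edge_irrefl by metis
  ultimately show ?thesis by simp
qed

lemma dist_edge_le: "u \<in> V \<Longrightarrow> E p q \<Longrightarrow> d u q \<le> Suc (d u p)"
  using dist_triangle[of u p q] dist_edge[of p q] edge_in_V by fastforce

lemma dist_path2_le: "E p r \<Longrightarrow> E r q \<Longrightarrow> d p q \<le> 2"
  using dist_triangle[of p r q] dist_edge edge_in_V by fastforce

definition geodesic :: "(nat \<Rightarrow> 'a) \<Rightarrow> nat \<Rightarrow> bool" where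
  "geodesic a m \<longleftrightarrow> (\<forall>i\<le>m. a i \<in> V) \<and> (\<forall>i<m. E (a i) (a (Suc i))) \<and> d (a 0) (a m) = m"

lemma path_dist_le:
  assumes V: "\<forall>i\<le>m. a i \<in> V" and E: "\<forall>i<m. E (a i) (a (Suc i))"
  shows "i \<le> j \<Longrightarrow> j \<le> m \<Longrightarrow> d (a i) (a j) \<le> j - i"
proof (induction j)
  case (Suc j)
  show ?case
  proof (cases "i = Suc j")
    case False
    then have "d (a i) (a j) \<le> j - i" using Suc by simp
    moreover have "d (a i) (a (Suc j)) \<le> d (a i) (a j) + d (a j) (a (Suc j))"
      using dist_triangle V Suc.prems by simp
    moreover have "d (a j) (a (Suc j)) = 1" using dist_edge E Suc.prems by simp
    ultimately show ?thesis using False Suc.prems by linarith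
  qed (use V Suc.prems in simp)
qed (use V in simp)

lemma geodesic_dist:
  assumes geo: "geodesic a m" and ij: "i \<le> j" "j \<le> m"
  shows "d (a i) (a j) = j - i"
proof -
  have V: "\<forall>i\<le>m. a i \<in> V" and E: "\<forall>i<m. E (a i) (a (Suc i))" and len: "d (a 0) (a m) = m"
    using geo unfolding geodesic_def by auto
  have "d (a 0) (a m) \<le> d (a 0) (a i) + d (a i) (a m)"
    using dist_triangle V ij by simp
  moreover have "d (a i) (a m) \<le> d (a i) (a j) + d (a j) (a m)"
    using dist_triangle V ij by simp
  moreover have "d (a 0) (a i) \<le> i" "d (a j) (a m) \<le> m - j" "d (a i) (a j) \<le> j - i"
    using path_dist_le[OF V E, of 0 i] path_dist_le[OF V E, of j m] path_dist_le[OF V E, of i j] ij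
    by auto
  ultimately show ?thesis using len ij by linarith
qed

lemma geodesic_exists:
  assumes "u \<in> V" "v \<in> V"
  shows "\<exists>a. geodesic a (d u v) \<and> a 0 = u \<and> a (d u v) = v"
proof -
  obtain xs where xs: "walk V E xs" "hd xs = u" "last xs = v" "length xs = Suc (d u v)"
    using shortest_walk[OF assms] by blast
  have ne: "xs \<noteq> []" using xs(1) by auto
  have ends: "xs ! 0 = u" "xs ! d u v = v"
    using xs(2-4) hd_conv_nth[OF ne] last_conv_nth[OF ne] by auto
  have "geodesic ((!) xs) (d u v)"
    using xs ends unfolding geodesic_def walk_def by auto
  then show ?thesis using ends by blast
qed

lemma exists_neighbour_closer:
  assumes "u \<in> V" "v \<in> V" "d u v = Suc k"
  shows "\<exists>x\<in>V. E x v \<and> d u x = k"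
proof -
  obtain a where a: "geodesic a (Suc k)" "a 0 = u" "a (Suc k) = v"
    using geodesic_exists[OF assms(1,2)] assms(3) by auto
  then have "a k \<in> V" "E (a k) v" "d u (a k) = k"
    using geodesic_dist[OF a(1), of 0 k] unfolding geodesic_def by auto
  then show ?thesis by blast
qed

lemma edge_if_dist_1: "u \<in> V \<Longrightarrow> v \<in> V \<Longrightarrow> d u v = 1 \<Longrightarrow> E u v"
  using exists_neighbour_closer[of u v 0] dist_eq_0 by auto

lemma dist_path2: "E p r \<Longrightarrow> E r q \<Longrightarrow> p \<noteq> q \<Longrightarrow> \<not> E p q \<Longrightarrow> d p q = 2"
  using dist_path2_le[of p r q] dist_eq_0[of p q] edge_if_dist_1[of p q] edge_in_V
  by fastforce

definition interval :: "'a \<Rightarrow> 'a \<Rightarrow> 'a set" where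
  "interval u v = {z \<in> V. d u z + d z v = d u v}"

lemma interval_in_V: "z \<in> interval u v \<Longrightarrow> z \<in> V"
  by (simp add: interval_def)

lemma end_in_interval: "u \<in> V \<Longrightarrow> v \<in> V \<Longrightarrow> v \<in> interval u v"
  by (simp add: interval_def)

lemma interval_dist_le: "z \<in> interval u v \<Longrightarrow> d u z \<le> d u v"
  by (auto simp: interval_def)

lemma interval_dist_end: "z \<in> interval u v \<Longrightarrow> d z v = d u v - d u z"
  by (auto simp: interval_def)

lemma interval_eq_start: "u \<in> V \<Longrightarrow> z \<in> interval u v \<Longrightarrow> d u z = 0 \<Longrightarrow> z = u"
  using dist_eq_0 by (auto simp: interval_def)

lemma interval_eq_end: "v \<in> V \<Longrightarrow> z \<in> interval u v \<Longrightarrow> d u z = d u v \<Longrightarrow> z = v"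
  using dist_eq_0 by (auto simp: interval_def)

lemma interval_mono:
  assumes u: "u \<in> V" and v: "v \<in> V" and z: "z \<in> interval u v"
  shows "interval u z \<subseteq> interval u v"
proof
  fix z' assume z': "z' \<in> interval u z"
  then have V: "z \<in> V" "z' \<in> V" using z by (auto simp: interval_def)
  have "d z' v \<le> d z' z + d z v" using dist_triangle V v by blast
  moreover have "d u v \<le> d u z' + d z' v" using dist_triangle u v V by blast
  ultimately show "z' \<in> interval u v" using z z' V by (auto simp: interval_def)
qed

lemma interval_neighbour_below:
  assumes u: "u \<in> V" and w: "w \<in> V" and r: "r \<in> interval u w"
    and z: "z \<in> V" "E z r" "Suc (d u z) = d u r"
  shows "z \<in> interval u w"
proof -
  have V: "r \<in> V" "w \<in> V" using r w by (auto simp: interval_def)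
  have "d z w \<le> d z r + d r w" using dist_triangle z(1) V by blast
  then have "d u z + d z w \<le> d u w" using dist_edge[OF z(2)] r z(3) by (simp add: interval_def)
  moreover have "d u w \<le> d u z + d z w" using dist_triangle u z(1) V by blast
  ultimately show ?thesis using z(1) by (simp add: interval_def)
qed

lemma interval_pred:
  assumes "u \<in> V" "v \<in> V" "z \<in> interval u v" "d u z = Suc j"
  shows "\<exists>z'\<in>interval u v. E z' z \<and> d u z' = j"
proof -
  obtain z' where "z' \<in> V" "E z' z" "d u z' = j"
    using exists_neighbour_closer assms interval_in_V by blast
  then show ?thesis using interval_neighbour_below assms by force
qed

lemma interval_succ:
  assumes u: "u \<in> V" and v: "v \<in> V" and z: "z \<in> interval u v" "d u z < d u v"
  shows "\<exists>z'\<in>interval u v. E z z' \<and> d u z' = Suc (d u z)"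
proof -
  have zV: "z \<in> V" using z interval_in_V by blast
  have "d v z \<noteq> 0" using z dist_commute[OF zV v] by (auto simp: interval_def)
  then obtain m where m: "d v z = Suc m" using not0_implies_Suc by blast
  obtain z' where z': "z' \<in> V" "E z' z" "d v z' = m"
    using exists_neighbour_closer[OF v zV m] by blast
  have "d u z' \<le> Suc (d u z)" using dist_edge_le[OF u] z' edge_sym by blast
  moreover have "d u v \<le> d u z' + d z' v" using dist_triangle u v z' by blast
  ultimately show ?thesis
    using z' z m dist_commute[OF zV v] dist_commute[OF z'(1) v] edge_sym
    by (auto simp: interval_def)
qed

lemma geodesic_in_interval:
  assumes "geodesic a m" "a 0 = u" "a m = v" "i \<le> m"
  shows "a i \<in> interval u v" "d u (a i) = i"
  using geodesic_dist[OF assms(1), of 0 i] geodesic_dist[OF assms(1), of i m]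
    geodesic_dist[OF assms(1), of 0 m] assms
  unfolding geodesic_def interval_def by auto

subsection \<open>Cycles glued from two geodesics\<close>

context
  fixes a b :: "nat \<Rightarrow> 'a" and \<alpha> \<beta> n :: nat
  assumes geo_a: "geodesic a \<alpha>" and geo_b: "geodesic b \<beta>" and same_start: "a 0 = b 0"
    and closing_edge: "E (a \<alpha>) (b \<beta>)" and n: "n = \<alpha> + \<beta> + 1"
    and balanced: "\<beta> \<le> \<alpha>" "\<alpha> \<le> Suc \<beta>" "1 \<le> \<beta>"
    and cross_dist: "\<And>i j. i \<le> \<alpha> \<Longrightarrow> j \<le> \<beta> \<Longrightarrow> d (a i) (b j) = min (i + j) (n - i - j)"
begin

abbreviation cyc :: "nat \<Rightarrow> 'a" where "cyc \<equiv> cycle_of_paths a b \<alpha> n"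

lemma cycle_of_paths_in_V: "i < n \<Longrightarrow> cyc i \<in> V"
  using geo_a geo_b n unfolding geodesic_def cycle_of_paths_def by auto

lemma cycle_of_paths_dist_ordered:
  assumes ij: "i \<le> j" "j < n"
  shows "d (cyc i) (cyc j) = min (j - i) (n - (j - i))"
proof (cases "j \<le> \<alpha>")
  case True
  then have "d (cyc i) (cyc j) = j - i"
    using geodesic_dist[OF geo_a] ij unfolding cycle_of_paths_def by auto
  moreover have "j - i \<le> n - (j - i)" using True n balanced by linarith
  ultimately show ?thesis by simp
next
  case j: False
  show ?thesis
  proof (cases "i \<le> \<alpha>")
    case True
    have "n - j \<le> \<beta>" using j n by linarith
    then have "d (cyc i) (cyc j) = min (i + (n - j)) (n - i - (n - j))"
      using cross_dist True j unfolding cycle_of_paths_def by auto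
    moreover have "i + (n - j) = n - (j - i)" "n - i - (n - j) = j - i" using ij j True by auto
    ultimately show ?thesis by (simp add: min.commute)
  next
    case False
    have le: "n - j \<le> n - i" "n - i \<le> \<beta>" using ij False n by auto
    have "d (cyc i) (cyc j) = d (b (n - j)) (b (n - i))"
      using dist_commute geo_b le False j unfolding cycle_of_paths_def geodesic_def by auto
    also have "\<dots> = j - i" using geodesic_dist[OF geo_b le] ij by simp
    finally show ?thesis using False j n balanced ij by simp
  qed
qed

lemma cycle_of_paths_dist:
  assumes "i < n" "j < n"
  shows "d (cyc i) (cyc j) = min (nat \<bar>int i - int j\<bar>) (n - nat \<bar>int i - int j\<bar>)"
proof (cases "i \<le> j")
  case True
  then have "nat \<bar>int i - int j\<bar> = j - i" by simp
  then show ?thesis using cycle_of_paths_dist_ordered True assms by simp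
next
  case False
  then have "nat \<bar>int i - int j\<bar> = i - j" by simp
  moreover have "d (cyc i) (cyc j) = d (cyc j) (cyc i)"
    using dist_commute cycle_of_paths_in_V assms by blast
  ultimately show ?thesis using cycle_of_paths_dist_ordered[of j i] False assms by simp
qed

lemma cycle_of_paths_edge:
  assumes i: "i < n"
  shows "E (cyc i) (cyc ((i + 1) mod n))"
proof -
  consider "i < \<alpha>" | "i = \<alpha>" | "\<alpha> < i \<and> i + 1 < n" | "i + 1 = n" using i by linarith
  then show ?thesis
  proof cases
    case 1
    then show ?thesis using geo_a n unfolding cycle_of_paths_def geodesic_def by auto
  next
    case 2
    then have "(i + 1) mod n = \<alpha> + 1" "n - (\<alpha> + 1) = \<beta>" using n balanced by auto
    then show ?thesis using closing_edge 2 unfolding cycle_of_paths_def by simp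
  next
    case 3
    then have "(i + 1) mod n = i + 1" "n - i = Suc (n - (i + 1))" "n - (i + 1) < \<beta>"
      using n by auto
    then show ?thesis using geo_b 3 edge_sym unfolding cycle_of_paths_def geodesic_def by auto
  next
    case 4
    then have "(i + 1) mod n = 0" "\<not> i \<le> \<alpha>" "n - i = 1" using n balanced by auto
    then show ?thesis
      using geo_b balanced same_start edge_sym unfolding cycle_of_paths_def geodesic_def by auto
  qed
qed

lemma isometric_cycle_of_paths: "isometric_cycle V E (map cyc [0..<n])"
  unfolding isometric_cycle_def length_map length_upt diff_zero
proof (intro conjI allI impI)
  show "3 \<le> n" using n balanced by simp
  show "distinct (map cyc [0..<n])"
  proof (subst distinct_conv_nth, intro allI impI)
    fix i j assume ij: "i < length (map cyc [0..<n])" "j < length (map cyc [0..<n])" "i \<noteq> j"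
    then have "d (cyc i) (cyc j) \<noteq> 0" using cycle_of_paths_dist[of i j] by simp linarith
    then show "map cyc [0..<n] ! i \<noteq> map cyc [0..<n] ! j"
      using ij cycle_of_paths_in_V by auto
  qed
  show "set (map cyc [0..<n]) \<subseteq> V" using cycle_of_paths_in_V by auto
qed (use cycle_of_paths_edge cycle_of_paths_dist in simp_all)

end

lemma pentagon_isometric_cycle:
  assumes e: "E a1 a2" "E a2 a3" "E a3 a4" "E a4 a5" "E a5 a1"
    and d2: "d a1 a3 = 2" "d a1 a4 = 2" "d a2 a4 = 2" "d a2 a5 = 2" "d a3 a5 = 2"
  shows "\<exists>cs. isometric_cycle V E cs \<and> length cs = 5"
proof -
  have V: "a1 \<in> V" "a2 \<in> V" "a3 \<in> V" "a4 \<in> V" "a5 \<in> V" using e edge_in_V by auto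
  have d1: "d a2 a1 = 1" "d a3 a4 = 1" "d a1 a5 = 1" using e dist_edge edge_sym by auto
  have d2': "d a3 a1 = 2" using d2 dist_commute V by metis
  have idx: "i \<le> 2 \<Longrightarrow> i = 0 \<or> i = 1 \<or> i = 2" for i :: nat by auto
  have "geodesic ((!) [a1, a2, a3]) 2" "geodesic ((!) [a1, a5, a4]) 2"
    unfolding geodesic_def using V e d2 edge_sym
    by (auto simp: le_Suc_eq less_Suc_eq numeral_2_eq_2)
  moreover have "d ([a1, a2, a3] ! i) ([a1, a5, a4] ! j) = min (i + j) (5 - i - j)"
    if "i \<le> 2" "j \<le> 2" for i j
    using idx[OF that(1)] idx[OF that(2)] V d1 d2 d2' by (elim disjE) simp_all
  ultimately have
    "isometric_cycle V E (map (cycle_of_paths ((!) [a1, a2, a3]) ((!) [a1, a5, a4]) 2 5) [0..<5])"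
    using isometric_cycle_of_paths[of "(!) [a1, a2, a3]" 2 "(!) [a1, a5, a4]" 2 5] e(3) by simp
  then show ?thesis by force
qed

subsection \<open>The two local conditions and their consequences\<close>

(* A violation of the first condition at level h will span an isometric cycle of length 2h + 1,
  a violation of the second one an isometric cycle of length 2h + 2; the parameter n bounds the
  length of that cycle. *)

definition triangle_cond_below :: "nat \<Rightarrow> bool" where
  "triangle_cond_below n \<longleftrightarrow> (\<forall>u p q. u \<in> V \<longrightarrow> E p q \<longrightarrow> d u p = d u q \<longrightarrow> 1 \<le> d u p \<longrightarrow>
     2 * d u p + 1 < n \<longrightarrow> (\<exists>z\<in>V. E z p \<and> E z q \<and> Suc (d u z) = d u p))"

definition ball_convex_below :: "nat \<Rightarrow> bool" where
  "ball_convex_below n \<longleftrightarrow> (\<forall>u p q y. u \<in> V \<longrightarrow> E p y \<longrightarrow> E q y \<longrightarrow> d u p = d u q \<longrightarrow>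
     d u y = Suc (d u p) \<longrightarrow> 2 * d u p + 2 < n \<longrightarrow> p = q \<or> E p q)"

lemma triangle_condD:
  "triangle_cond_below n \<Longrightarrow> u \<in> V \<Longrightarrow> E p q \<Longrightarrow> d u p = h \<Longrightarrow> d u q = h \<Longrightarrow> 1 \<le> h \<Longrightarrow>
    2 * h + 1 < n \<Longrightarrow> \<exists>z\<in>V. E z p \<and> E z q \<and> Suc (d u z) = h"
  unfolding triangle_cond_below_def by (elim allE[of _ u] allE[of _ p] allE[of _ q]) simp

lemma ball_convexD:
  "ball_convex_below n \<Longrightarrow> u \<in> V \<Longrightarrow> E p y \<Longrightarrow> E q y \<Longrightarrow> d u p = h \<Longrightarrow> d u q = h \<Longrightarrow>
    d u y = Suc h \<Longrightarrow> 2 * h + 2 < n \<Longrightarrow> p = q \<or> E p q"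
  unfolding ball_convex_below_def by (elim allE[of _ u] allE[of _ p] allE[of _ q] allE[of _ y]) simp

context
  fixes n :: nat
  assumes TC: "triangle_cond_below n" and CC: "ball_convex_below n"
begin

lemma dist_step_up:
  assumes c: "c \<in> V" and path: "E q q1" "E q1 r"
    and h: "d c q1 = h" "Suc (d c r) = h" "2 * h + 1 < n" and far: "q \<noteq> r" "\<not> E q r"
    and no_apex: "\<And>z. z \<in> V \<Longrightarrow> E z q \<Longrightarrow> E z q1 \<Longrightarrow> E z r \<Longrightarrow> Suc (d c z) \<noteq> h"
  shows "d c q = Suc h"
proof -
  have "d c q \<le> Suc h" "h \<le> Suc (d c q)"
    using dist_edge_le[OF c] path(1) edge_sym h(1) by metis+
  then consider "Suc (d c q) = h" | "d c q = h" | "d c q = Suc h" by linarith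
  then show ?thesis
  proof cases
    case 1
    then have "q = r \<or> E q r"
      using ball_convexD[OF CC c path(1) edge_sym[OF path(2)], of "d c q"] h by simp
    then show ?thesis using far by blast
  next
    case 2
    obtain z where z: "z \<in> V" "E z q" "E z q1" "Suc (d c z) = h"
      using triangle_condD[OF TC c path(1) 2 h(1)] h by auto
    have "z = r \<or> E z r"
      using ball_convexD[OF CC c z(3) edge_sym[OF path(2)], of "d c z"] z h by simp
    then show ?thesis using far no_apex z edge_sym by blast
  qed
qed

lemma dist_via_end:
  assumes u: "u \<in> V" and w: "w \<in> V" and c: "c \<in> V" and r: "E w r" "Suc (d c r) = d c w"
    and top_far: "\<And>q. q \<in> interval u w \<Longrightarrow> Suc (d u q) = d u w \<Longrightarrow> q \<noteq> r \<and> \<not> E q r"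
    and top_no_apex: "\<And>q z. q \<in> interval u w \<Longrightarrow> Suc (d u q) = d u w \<Longrightarrow> z \<in> V \<Longrightarrow>
      E z q \<Longrightarrow> E z w \<Longrightarrow> E z r \<Longrightarrow> Suc (d c z) \<noteq> d c w"
  shows "q \<in> interval u w \<Longrightarrow> 2 * (d c w + d q w) \<le> n \<Longrightarrow> d c q = d c w + d q w"
proof (induction "d q w" arbitrary: q rule: less_induct)
  case less
  have qV: "q \<in> V" and qw: "d q w = d u w - d u q" and qu: "d u q \<le> d u w"
    using less.prems interval_in_V interval_dist_end interval_dist_le by auto
  consider "d q w = 0" | "d q w = 1" | "2 \<le> d q w" by linarith
  then show ?case
  proof cases
    case 1
    then show ?thesis using dist_eq_0[OF qV w] by simp
  next
    case 2
    then have "E q w" "Suc (d u q) = d u w" using edge_if_dist_1[OF qV w] qw qu by auto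
    then show ?thesis
      using dist_step_up[OF c \<open>E q w\<close> r(1) refl r(2)] less.prems top_far top_no_apex 2 by simp
  next
    case 3
    then have "d u q < d u w" "Suc (d u q) < d u w" using qw by linarith+
    obtain q1 where q1: "q1 \<in> interval u w" "E q q1" "d u q1 = Suc (d u q)"
      using interval_succ[OF u w less.prems(1) \<open>d u q < d u w\<close>] by blast
    obtain r' where r': "r' \<in> interval u w" "E q1 r'" "d u r' = Suc (d u q1)"
      using interval_succ[OF u w q1(1)] q1(3) \<open>Suc (d u q) < d u w\<close> by auto
    have q1w: "d q1 w = d q w - 1" and r'w: "d r' w = d q w - 2"
      using q1 r' qw interval_dist_end by auto
    define h where "h = d c w + d q w - 1"
    have dq1: "d c q1 = h" using less.hyps[of q1] q1w q1(1) less.prems(2) 3 h_def by simp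
    have dr': "Suc (d c r') = h" using less.hyps[of r'] r'w r'(1) less.prems(2) 3 h_def by simp
    have no_apex: "Suc (d c z) \<noteq> h" if z: "z \<in> V" "E z q" "E z q1" "E z r'" for z
    proof -
      have "d u r' \<le> Suc (d u z)" "d u z \<le> Suc (d u q)"
        using dist_edge_le[OF u] z(2,4) edge_sym by blast+
      then have "Suc (d u z) = d u r'" using r'(3) q1(3) by simp
      then have "z \<in> interval u w" using interval_neighbour_below[OF u w r'(1) z(1,4)] by simp
      moreover have "d z w = d q w - 1"
        using interval_dist_end[OF calculation] \<open>Suc (d u z) = d u r'\<close> r' q1 qw by simp
      ultimately have "d c z = h" using less.hyps[of z] less.prems(2) 3 h_def by simp
      then show ?thesis by simp
    qed
    have "d u q < d u r'" using q1(3) r'(3) by simp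
    then have "q \<noteq> r'" "\<not> E q r'" using dist_edge_le[OF u, of q r'] q1(3) r'(3) by auto
    then have "d c q = Suc h"
      using dist_step_up[OF c q1(2) r'(2) dq1 dr'] no_apex less.prems(2) 3 h_def by simp
    then show ?thesis using h_def 3 by simp
  qed
qed

lemma dist_via_start_step:
  assumes u: "u \<in> V" and v: "v \<in> V" and c: "c \<in> interval u v" "2 \<le> d u c"
    and q: "q \<in> V" and bound: "2 * (d u c + d u q) \<le> n"
    and IH: "\<And>c'. c' \<in> interval u v \<Longrightarrow> d u c' < d u c \<Longrightarrow> d c' q = d u c' + d u q"
  shows "d c q = d u c + d u q"
proof -
  define N where "N = d u c + d u q"
  have cV: "c \<in> V" using c interval_in_V by blast
  have "d u c = Suc (d u c - 1)" "d u c - 1 = Suc (d u c - 2)" using c(2) by simp_all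
  obtain c1 where c1: "c1 \<in> interval u v" "E c1 c" "d u c1 = d u c - 1"
    using interval_pred[OF u v c(1) \<open>d u c = Suc (d u c - 1)\<close>] by blast
  obtain c2 where c2: "c2 \<in> interval u v" "E c2 c1" "d u c2 = d u c - 2"
    using interval_pred[OF u v c1(1)] c1(3) \<open>d u c - 1 = Suc (d u c - 2)\<close> by auto
  have c1V: "c1 \<in> V" and c2V: "c2 \<in> V" using c1 c2 interval_in_V by auto
  have dc1: "d q c1 = N - 1" and dc2: "d q c2 = N - 2"
    using IH[OF c1(1)] IH[OF c2(1)] c1(3) c2(3) c(2) dist_commute q c1V c2V N_def by auto
  have "d c q \<le> N" using dist_triangle[OF cV u q] dist_commute[OF cV u] N_def by simp
  moreover have "d q c1 \<le> d q c + 1" using dist_triangle[OF q cV c1V] dist_edge[OF c1(2)]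
    dist_commute[OF c1V cV] by simp
  ultimately consider "d q c = N - 2" | "d q c = N - 1" | "d c q = N"
    using dc1 dist_commute[OF cV q] by linarith
  then show ?thesis
  proof cases
    case 1
    then have "c = c2 \<or> E c c2"
      using ball_convexD[OF CC q edge_sym[OF c1(2)] c2(2) 1 dc2] dc1 bound c(2) N_def by simp
    moreover have "c \<noteq> c2" using c2(3) c(2) by auto
    ultimately have "E c2 c" using edge_sym by blast
    then show ?thesis using dist_edge_le[OF u] c2(3) c(2) by fastforce
  next
    case 2
    have "1 \<le> N - 1" "2 * (N - 1) + 1 < n" using bound c(2) N_def by presburger+
    then obtain z where z: "z \<in> V" "E z c1" "E z c" "Suc (d q z) = N - 1"
      using triangle_condD[OF TC q c1(2) dc1 2] by blast
    have "z = c2 \<or> E z c2"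
      using ball_convexD[OF CC q z(2) c2(2), of "N - 2"] z(4) dc2 dc1 bound c(2) N_def by simp
    moreover have "z \<noteq> c2" using dist_edge_le[OF u z(3)] c2(3) c(2) by auto
    ultimately have "E z c2" by simp
    then have "Suc (d u z) = d u c"
      using dist_edge_le[OF u z(3)] dist_edge_le[OF u edge_sym[OF \<open>E z c2\<close>]] c2(3) c(2) by linarith
    then have "z \<in> interval u v" using interval_neighbour_below[OF u v c(1) z(1,3)] by simp
    then have "d z q = N - 1" using IH \<open>Suc (d u z) = d u c\<close> c(2) N_def by fastforce
    then show ?thesis using z(4) dist_commute[OF z(1) q] by simp
  qed (simp add: N_def)
qed

lemma dist_via_start:
  assumes u: "u \<in> V" and v: "v \<in> V" and w: "w \<in> V"
    and first_steps: "\<And>c q. c \<in> interval u v \<Longrightarrow> q \<in> interval u w \<Longrightarrow> d u c = 1 \<Longrightarrow> d u q = 1 \<Longrightarrow>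
      c \<noteq> q \<and> \<not> E c q"
  shows "c \<in> interval u v \<Longrightarrow> q \<in> interval u w \<Longrightarrow> 2 * (d u c + d u q) \<le> n \<Longrightarrow>
    d c q = d u c + d u q"
proof (induction "d u c + d u q" arbitrary: c q rule: less_induct)
  case less
  have cV: "c \<in> V" and qV: "q \<in> V" using less.prems interval_in_V by auto
  consider "d u c = 0" | "d u q = 0" | "d u c = 1" "d u q = 1" | "2 \<le> d u c" | "2 \<le> d u q"
    by linarith
  then show ?case
  proof cases
    case 1
    then show ?thesis using interval_eq_start[OF u less.prems(1)] by simp
  next
    case 2
    then show ?thesis using interval_eq_start[OF u less.prems(2)] dist_commute[OF cV u] by simp
  next
    case 3
    then have "E c u" "E u q" using edge_if_dist_1 u cV qV dist_commute[OF cV u] by auto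
    then show ?thesis using dist_path2 first_steps[OF less.prems(1,2)] 3 by simp
  next
    case 4
    show ?thesis
    proof (rule dist_via_start_step[OF u v less.prems(1) 4 qV less.prems(3)])
      fix c' assume "c' \<in> interval u v" "d u c' < d u c"
      then show "d c' q = d u c' + d u q"
        by (intro less.hyps) (use less.prems in auto)
    qed
  next
    case 5
    have "d q c = d u q + d u c"
    proof (rule dist_via_start_step[OF u w less.prems(2) 5 cV])
      show "2 * (d u q + d u c) \<le> n" using less.prems(3) by simp
      fix q' assume q': "q' \<in> interval u w" "d u q' < d u q"
      then have "d c q' = d u c + d u q'"
        by (intro less.hyps) (use less.prems in auto)
      then show "d q' c = d u q' + d u c"
        using dist_commute[OF cV] interval_in_V[OF q'(1)] by simp
    qed
    then show ?thesis using dist_commute[OF cV qV] by simp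
  qed
qed

end

end

subsection \<open>A minimal violation of the triangle condition\<close>

locale triangle_violation = connected_simple_graph +
  fixes n :: nat and u v w :: 'a and k :: nat
  assumes TC: "triangle_cond_below n" and CC: "ball_convex_below n"
    and u: "u \<in> V" and vw: "E v w" and dv: "d u v = k" and dw: "d u w = k"
    and k: "2 \<le> k" and n: "n = 2 * k + 1"
    and no_apex: "\<And>z. z \<in> V \<Longrightarrow> E z v \<Longrightarrow> E z w \<Longrightarrow> Suc (d u z) \<noteq> k"
begin

lemma v_in_V: "v \<in> V" and w_in_V: "w \<in> V"
  using vw edge_in_V by auto

lemma dist_w_from_interval:
  assumes c: "c \<in> interval u v" "1 \<le> d u c"
  shows "d c w = Suc (d c v)"
proof -
  have cV: "c \<in> V" using c interval_in_V by blast
  have cv: "d c v = k - d u c" and ck: "d u c \<le> k"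
    using interval_dist_end[OF c(1)] interval_dist_le[OF c(1)] dv by auto
  have "d c w \<le> Suc (d c v)" using dist_edge_le[OF cV vw] .
  moreover have "k \<le> d u c + d c w" using dist_triangle[OF u cV w_in_V] dw by simp
  moreover have "d c w \<noteq> d c v"
  proof
    assume eq: "d c w = d c v"
    show False
    proof (cases "d c v = 0")
      case True
      then show False
        using dist_eq_0[OF cV v_in_V] dist_eq_0[OF cV w_in_V] eq vw edge_irrefl by metis
    next
      case False
      obtain z where z: "z \<in> V" "E z v" "E z w" "Suc (d c z) = d c v"
        using triangle_condD[OF TC cV vw refl eq] False c(2) cv n by auto
      have "d u z \<le> d u c + d c z" using dist_triangle[OF u cV z(1)] .
      moreover have "k \<le> Suc (d u z)" using dist_edge_le[OF u z(2)] dv by simp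
      ultimately show False using no_apex[OF z(1-3)] z(4) cv ck by linarith
    qed
  qed
  ultimately show ?thesis using cv ck by linarith
qed

lemma top_no_apex:
  assumes c: "c \<in> interval u v" "1 \<le> d u c" and q: "q \<in> interval u w" "Suc (d u q) = k"
    and z: "z \<in> V" "E z q" "E z w" "E z v"
  shows "Suc (d c z) \<noteq> d c w"
proof
  assume "Suc (d c z) = d c w"
  then have cz: "d c z = d c v" using dist_w_from_interval[OF c] by simp
  have cV: "c \<in> V" and qV: "q \<in> V" using c q interval_in_V by auto
  have cv: "d c v = k - d u c" and ck: "d u c \<le> k"
    using interval_dist_end[OF c(1)] interval_dist_le[OF c(1)] dv by auto
  have "E q w" using edge_if_dist_1[OF qV w_in_V] interval_dist_end[OF q(1)] q(2) dw by simp
  then have qv: "\<not> E q v" using no_apex[OF qV] q(2) by blast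
  have "k \<le> Suc (d u z)" "d u z \<le> Suc (d u q)"
    using dist_edge_le[OF u z(4)] dist_edge_le[OF u edge_sym[OF z(2)]] dv by auto
  then have uz: "d u z = k" using no_apex[OF z(1) z(4) z(3)] q(2) by linarith
  have "d c v \<noteq> 0"
    using dist_eq_0[OF cV v_in_V] dist_eq_0[OF cV z(1)] cz z(4) edge_irrefl by metis
  then have "1 \<le> d c v" "2 * d c v + 1 < n" using cv n c(2) by linarith+
  then obtain z3 where z3: "z3 \<in> V" "E z3 z" "E z3 v" "Suc (d c z3) = d c v"
    using triangle_condD[OF TC cV z(4) cz refl] by blast
  have "d u z3 \<le> d u c + d c z3" "k \<le> Suc (d u z3)"
    using dist_triangle[OF u cV z3(1)] dist_edge_le[OF u z3(3)] dv by auto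
  then have uz3: "Suc (d u z3) = k" using z3(4) cv ck by linarith
  have "z3 = q \<or> E z3 q"
    using ball_convexD[OF CC u z3(2) edge_sym[OF z(2)], of "k - 1"] uz3 q(2) uz n by simp
  moreover have "z3 \<noteq> q" using qv z3(3) by blast
  ultimately have "E z3 q" by simp
  have "q \<noteq> v" "\<not> E v q" using q(2) dv qv edge_sym by auto
  then have "d v q = Suc 1" using dist_path2[OF vw edge_sym[OF \<open>E q w\<close>]] by simp
  then have "w = z3 \<or> E w z3"
    using ball_convexD[OF CC v_in_V edge_sym[OF \<open>E q w\<close>] \<open>E z3 q\<close>] dist_edge[OF vw]
      dist_edge[OF edge_sym[OF z3(3)]] k n by simp
  then show False using no_apex[OF z3(1,3)] uz3 dw edge_sym by auto
qed

lemma first_steps_separated: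
  assumes c: "c \<in> interval u v" "d u c = 1" and q: "q \<in> interval u w" "d u q = 1"
  shows "c \<noteq> q \<and> \<not> E c q"
proof -
  have cV: "c \<in> V" and qV: "q \<in> V" using c q interval_in_V by auto
  have cv: "d c v = k - 1" using interval_dist_end[OF c(1)] c(2) dv by simp
  then have cw: "d c w = k" using dist_w_from_interval[OF c(1)] c(2) k by simp
  have qw: "d q w = k - 1" using interval_dist_end[OF q(1)] q(2) dw by simp
  have "\<not> E c q"
  proof
    assume "E c q"
    have "d q w = Suc (k - 2)" using qw k by simp
    then obtain q' where q': "q' \<in> interval q w" "E q' w" "d q q' = k - 2"
      using interval_pred[OF qV w_in_V end_in_interval[OF qV w_in_V]] by blast
    have q'V: "q' \<in> V" using q' interval_in_V by blast
    have "d c q' \<le> d c q + d q q'" "d c w \<le> d c q' + d q' w"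
      using dist_triangle cV qV q'V w_in_V by blast+
    then have cq': "d c q' = k - 1" using dist_edge[OF \<open>E c q\<close>] dist_edge[OF q'(2)] q'(3) cw k
      by linarith
    have "d u q' \<le> d u q + d q q'" "k \<le> Suc (d u q')"
      using dist_triangle[OF u qV q'V] dist_edge_le[OF u q'(2)] dw by auto
    then have uq': "Suc (d u q') = k" using q(2) q'(3) k by linarith
    have "v = q' \<or> E v q'"
      using ball_convexD[OF CC cV vw q'(2) cv cq'] cw k n by simp
    then show False using no_apex[OF q'V _ q'(2)] uq' dv edge_sym by auto
  qed
  then show ?thesis using cw qw k by auto
qed

lemma cross_dist:
  assumes c: "c \<in> interval u v" and q: "q \<in> interval u w"
  shows "d c q = min (d u c + d u q) (n - d u c - d u q)"
proof (cases "d u c + d u q \<le> k")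
  case True
  then have "d c q = d u c + d u q"
    using dist_via_start[OF TC CC u v_in_V w_in_V first_steps_separated c q] n by simp
  then show ?thesis using True n by simp
next
  case False
  have cV: "c \<in> V" using c interval_in_V by blast
  have ck: "d u c \<le> k" and cv: "d c v = k - d u c"
    using interval_dist_le[OF c] interval_dist_end[OF c] dv by auto
  have qk: "d u q \<le> k" and qw: "d q w = k - d u q"
    using interval_dist_le[OF q] interval_dist_end[OF q] dw by auto
  moreover have "1 \<le> d u c" using False qk by linarith
  ultimately have cw: "d c w = Suc (k - d u c)" using dist_w_from_interval[OF c] cv by simp
  have "d c q = d c w + d q w"
  proof (rule dist_via_end[OF TC CC u w_in_V cV edge_sym[OF vw] _ _ _ q])
    show "Suc (d c v) = d c w" using cv cw by simp
    show "2 * (d c w + d q w) \<le> n" using cw qw False n ck qk by presburger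
  next
    fix q' assume q': "q' \<in> interval u w" "Suc (d u q') = d u w"
    then show "q' \<noteq> v \<and> \<not> E q' v"
      using no_apex edge_if_dist_1[OF interval_in_V[OF q'(1)] w_in_V] interval_dist_end[OF q'(1)]
        interval_in_V dv dw by fastforce
    fix z assume "z \<in> V" "E z q'" "E z w" "E z v"
    then show "Suc (d c z) \<noteq> d c w" using top_no_apex[OF c _ q'(1)] q'(2) False qk dw by simp
  qed
  then show ?thesis using cw qw False n ck qk by simp
qed

lemma isometric_cycle_of_violation: "\<exists>cs. isometric_cycle V E cs \<and> length cs = n"
proof -
  obtain a where a: "geodesic a k" "a 0 = u" "a k = v"
    using geodesic_exists[OF u v_in_V] dv by auto
  obtain b where b: "geodesic b k" "b 0 = u" "b k = w"
    using geodesic_exists[OF u w_in_V] dw by auto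
  have "d (a i) (b j) = min (i + j) (n - i - j)" if "i \<le> k" "j \<le> k" for i j
    using cross_dist geodesic_in_interval[OF a that(1)] geodesic_in_interval[OF b that(2)] by simp
  moreover have "n = k + k + 1" using n by simp
  ultimately have "isometric_cycle V E (map (cycle_of_paths a b k n) [0..<n])"
    using isometric_cycle_of_paths[OF a(1) b(1)] a b vw k by simp
  then show ?thesis by force
qed

end

subsection \<open>A minimal violation of the convexity of balls\<close>

locale sphere_edge = connected_simple_graph +
  fixes n :: nat and u x y :: 'a and k :: nat
  assumes TC: "triangle_cond_below n" and CC: "ball_convex_below n"
    and no_pentagon: "\<And>cs. isometric_cycle V E cs \<Longrightarrow> length cs \<noteq> 5"
    and u: "u \<in> V" and dx: "d u x = k" and dy: "d u y = Suc k" and xy: "E x y"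
    and k: "1 \<le> k" and n: "n = 2 * k + 2"
begin

definition rival :: "'a \<Rightarrow> bool" where
  "rival x' \<longleftrightarrow> d u x' = k \<and> E x' y \<and> x' \<noteq> x \<and> \<not> E x x'"

lemma x_in_V: "x \<in> V" and y_in_V: "y \<in> V"
  using xy edge_in_V by auto

lemma rival_in_V: "rival x' \<Longrightarrow> x' \<in> V"
  using edge_in_V by (auto simp: rival_def)

lemma interval_x_subset: "interval u x \<subseteq> interval u y"
proof (rule interval_mono[OF u y_in_V])
  show "x \<in> interval u y" using dx dy dist_edge[OF xy] x_in_V by (simp add: interval_def)
qed

lemma interval_rival_subset: "rival x' \<Longrightarrow> interval u x' \<subseteq> interval u y"
proof (rule interval_mono[OF u y_in_V])
  assume "rival x'"
  then show "x' \<in> interval u y" using dy dist_edge rival_in_V by (simp add: interval_def rival_def)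
qed

lemma no_apex_below:
  assumes k2: "2 \<le> k" and r: "rival x'" and z: "z \<in> V" "E z x" "E z x'"
  shows "Suc (d u z) \<noteq> k"
proof
  assume uz: "Suc (d u z) = k"
  have "d u y \<le> d u z + d z y" using dist_triangle[OF u z(1) y_in_V] .
  then have "d z y = Suc 1" using dist_path2_le[OF z(2) xy] uz dy by simp
  then have "x = x' \<or> E x x'"
    using ball_convexD[OF CC z(1) xy _ dist_edge[OF z(2)] dist_edge[OF z(3)]] r k2 n
    by (simp add: rival_def)
  then show False using r by (simp add: rival_def)
qed

lemma no_apex_level:
  assumes k2: "2 \<le> k" and r: "rival x'" and z: "z \<in> V" "d u z = k" "E z x" "E z x'"
  shows False
proof -
  have ux': "d u x' = k" and x'y: "E x' y" and xx': "x \<noteq> x'" "\<not> E x x'"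
    using r by (auto simp: rival_def)
  obtain z1 where z1: "z1 \<in> V" "E z1 x" "E z1 z" "Suc (d u z1) = k"
    using triangle_condD[OF TC u edge_sym[OF z(3)] dx z(2)] k n by auto
  obtain z2 where z2: "z2 \<in> V" "E z2 z" "E z2 x'" "Suc (d u z2) = k"
    using triangle_condD[OF TC u z(4) z(2) ux'] k n by auto
  have "z1 = z2 \<or> E z1 z2"
    using ball_convexD[OF CC u z1(3) z2(2), of "k - 1"] z1(4) z2(4) z(2) n by auto
  moreover have n1: "\<not> E z1 x'" using no_apex_below[OF k2 r z1(1,2)] z1(4) by blast
  ultimately have e12: "E z1 z2" using z2(3) by blast
  have n2: "\<not> E x z2" using no_apex_below[OF k2 r z2(1) _ z2(3)] z2(4) edge_sym by blast
  have "d u y \<le> d u z1 + d z1 y" "d u y \<le> d u z2 + d z2 y"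
    using dist_triangle u z1(1) z2(1) y_in_V by blast+
  then have "d z1 y = 2" "d y z2 = 2"
    using dist_path2_le[OF z1(2) xy] dist_path2_le[OF edge_sym[OF x'y] edge_sym[OF z2(3)]]
      dist_commute[OF z2(1) y_in_V] z1(4) z2(4) dy by auto
  moreover have "z1 \<noteq> x'" using z1(4) ux' by auto
  then have "d z1 x' = 2" using dist_path2[OF e12 z2(3) _ n1] by simp
  moreover have "d x x' = 2" using dist_path2[OF xy edge_sym[OF x'y]] xx' by simp
  moreover have "x \<noteq> z2" using z2(4) dx by auto
  then have "d x z2 = 2" using dist_path2[OF edge_sym[OF z1(2)] e12 _ n2] by simp
  ultimately obtain cs where "isometric_cycle V E cs" "length cs = 5"
    using pentagon_isometric_cycle[OF z1(2) xy edge_sym[OF x'y] edge_sym[OF z2(3)] edge_sym[OF e12]]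
    by blast
  then show False using no_pentagon by blast
qed

lemma dist_rival_from_interval:
  assumes r: "rival x'" and c: "c \<in> interval u x" "1 \<le> d u c"
  shows "d c x' = Suc (d c y)"
proof -
  have cV: "c \<in> V" and x'V: "x' \<in> V" using c r interval_in_V rival_in_V by auto
  have x'y: "E x' y" and xx': "x \<noteq> x'" "\<not> E x x'" using r by (auto simp: rival_def)
  have ck: "d u c \<le> k" and cx: "d c x = k - d u c"
    using interval_dist_le[OF c(1)] interval_dist_end[OF c(1)] dx by auto
  have cy: "d c y = Suc (k - d u c)"
    using interval_dist_end[of c u y] interval_x_subset c(1) dy ck by auto
  have "d c x' \<le> Suc (d c y)" "d c y \<le> Suc (d c x')"
    using dist_edge_le[OF cV] x'y edge_sym by blast+
  moreover have "d c x' \<noteq> k - d u c"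
  proof
    assume "d c x' = k - d u c"
    then have "x = x' \<or> E x x'" using ball_convexD[OF CC cV xy x'y cx] cy c(2) k n by simp
    then show False using xx' by blast
  qed
  moreover have "d c x' \<noteq> d c y"
  proof
    assume eq: "d c x' = d c y"
    show False
    proof (cases "d u c = k")
      case True
      then have "c = x" using interval_eq_end[OF x_in_V c(1)] dx by simp
      then show False using edge_if_dist_1[OF x_in_V x'V] eq cy True xx' by simp
    next
      case False
      have "1 \<le> d c y" "2 * d c y + 1 < n" using cy c(2) ck n by presburger+
      then obtain z where z: "z \<in> V" "E z y" "E z x'" "Suc (d c z) = d c y"
        using triangle_condD[OF TC cV edge_sym[OF x'y] refl eq] by blast
      have "z = x \<or> E z x" using ball_convexD[OF CC cV z(2) xy _ cx] z(4) cy c(2) k n by simp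
      moreover have "z \<noteq> x" using z(3) xx' by blast
      ultimately have "E z x" by simp
      have "d u y \<le> Suc (d u z)" "d u z \<le> d u c + d c z"
        using dist_edge_le[OF u z(2)] dist_triangle[OF u cV z(1)] by auto
      then have "d u z = k" using dy z(4) cy ck by linarith
      then show False using no_apex_level[OF _ r z(1) _ \<open>E z x\<close> z(3)] False c(2) ck by linarith
    qed
  qed
  ultimately show ?thesis using cy ck by linarith
qed

lemma rival_top_no_apex:
  assumes r: "rival x'" and c: "c \<in> interval u x" "2 \<le> d u c"
    and q: "q \<in> interval u x'" "Suc (d u q) = k" and z: "z \<in> V" "E z q" "E z x'" "E z y"
  shows "Suc (d c z) \<noteq> d c x'"
proof -
  have k2: "2 \<le> k" using interval_dist_le[OF c(1)] c(2) dx by simp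
  have "d u y \<le> Suc (d u z)" "d u z \<le> Suc (d u q)"
    using dist_edge_le[OF u z(4)] dist_edge_le[OF u edge_sym[OF z(2)]] by auto
  then have uz: "d u z = k" using q(2) dy by linarith
  have "\<not> E z x" using no_apex_level[OF k2 r z(1) uz] z(3) by blast
  moreover have "z \<noteq> x" using z(3) r by (auto simp: rival_def)
  ultimately have "rival z" using uz z(4) edge_sym by (auto simp: rival_def)
  then show ?thesis using dist_rival_from_interval[OF _ c(1)] r c(2) by simp
qed

lemma rival_first_steps_separated:
  assumes r: "rival x'" and c: "c \<in> interval u x" "d u c = 1"
    and q: "q \<in> interval u x'" "d u q = 1"
  shows "c \<noteq> q \<and> \<not> E c q"
proof -
  have cV: "c \<in> V" and qV: "q \<in> V" and x'V: "x' \<in> V"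
    using c q r interval_in_V rival_in_V by auto
  have "d c y = k" using interval_dist_end[of c u y] interval_x_subset c dy by auto
  then have cx': "d c x' = Suc k" using dist_rival_from_interval[OF r c(1)] c(2) by simp
  have qx': "d q x' = k - 1" using interval_dist_end[OF q(1)] q(2) r by (simp add: rival_def)
  have "d c x' \<le> d c q + d q x'" using dist_triangle[OF cV qV x'V] .
  then show ?thesis using cx' qx' dist_edge[of c q] k by auto
qed

lemma rival_cross_dist:
  assumes r: "rival x'" and c: "c \<in> interval u x" and q: "q \<in> interval u x'"
  shows "d c q = min (d u c + d u q) (n - d u c - d u q)"
proof -
  have cV: "c \<in> V" and x'V: "x' \<in> V" using c r interval_in_V rival_in_V by auto
  have ux': "d u x' = k" and x'y: "E x' y" using r by (auto simp: rival_def)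
  have ck: "d u c \<le> k" and qk: "d u q \<le> k" and qx': "d q x' = k - d u q"
    using interval_dist_le[OF c] interval_dist_le[OF q] interval_dist_end[OF q] dx ux' by auto
  have cy: "d c y = Suc k - d u c" using interval_dist_end[of c u y] interval_x_subset c dy by auto
  consider "d u c + d u q \<le> k"
    | "\<not> d u c + d u q \<le> k" "d u q = k"
    | "\<not> d u c + d u q \<le> k" "d u q < k"
    using qk by linarith
  then show ?thesis
  proof cases
    case 1
    then have "d c q = d u c + d u q"
      using dist_via_start[OF TC CC u x_in_V x'V rival_first_steps_separated[OF r] c q] n by simp
    then show ?thesis using 1 n by simp
  next
    case 2
    then have "q = x'" using interval_eq_end[OF x'V q] ux' by simp
    then show ?thesis using dist_rival_from_interval[OF r c] 2 cy ck n by simp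
  next
    case 3
    have cx': "d c x' = Suc (d c y)" using dist_rival_from_interval[OF r c] 3 by simp
    have "d c q = d c x' + d q x'"
    proof (rule dist_via_end[OF TC CC u x'V cV x'y _ _ _ q])
      show "Suc (d c y) = d c x'" using cx' by simp
      show "2 * (d c x' + d q x') \<le> n" using cx' cy qx' 3 ck n by presburger
    next
      fix q' assume q': "q' \<in> interval u x'" "Suc (d u q') = d u x'"
      then show "q' \<noteq> y \<and> \<not> E q' y" using dist_edge_le[OF u, of q' y] dy ux' by auto
      fix z assume "z \<in> V" "E z q'" "E z x'" "E z y"
      then show "Suc (d c z) \<noteq> d c x'" using rival_top_no_apex[OF r c _ q'(1)] q'(2) 3 ux' by simp
    qed
    then show ?thesis using cx' cy qx' 3 ck n by simp
  qed
qed

lemma isometric_cycle_of_rival: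
  assumes r: "rival x'"
  shows "\<exists>cs. isometric_cycle V E cs \<and> length cs = n"
proof -
  have x'V: "x' \<in> V" and ux': "d u x' = k" and x'y: "E x' y"
    using r rival_in_V by (auto simp: rival_def)
  obtain a where a: "geodesic a k" "a 0 = u" "a k = x"
    using geodesic_exists[OF u x_in_V] dx by auto
  obtain b where b: "geodesic b k" "b 0 = u" "b k = x'"
    using geodesic_exists[OF u x'V] ux' by auto
  define a' where "a' = a(Suc k := y)"
  have geo: "geodesic a' (Suc k)"
    unfolding geodesic_def
  proof (intro conjI allI impI)
    fix i assume "i \<le> Suc k"
    then show "a' i \<in> V" using a y_in_V unfolding a'_def geodesic_def by (cases "i = Suc k") auto
  next
    fix i assume "i < Suc k"
    then show "E (a' i) (a' (Suc i))"
      using a xy unfolding a'_def geodesic_def by (cases "i = k") auto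
  qed (use a dy in \<open>simp add: a'_def\<close>)
  have "d (a' i) (b j) = min (i + j) (n - i - j)" if "i \<le> Suc k" "j \<le> k" for i j
  proof (cases "i = Suc k")
    case True
    have "b j \<in> interval u y" "d u (b j) = j"
      using interval_rival_subset[OF r] geodesic_in_interval[OF b that(2)] by auto
    then have "d y (b j) = Suc k - j"
      using interval_dist_end dy dist_commute[OF y_in_V] interval_in_V by metis
    then show ?thesis using True n that(2) by (simp add: a'_def)
  next
    case False
    then show ?thesis
      using rival_cross_dist[OF r] geodesic_in_interval[OF a] geodesic_in_interval[OF b] that
      by (simp add: a'_def)
  qed
  moreover have "n = Suc k + k + 1" using n by simp
  ultimately have "isometric_cycle V E (map (cycle_of_paths a' b (Suc k) n) [0..<n])"
    using isometric_cycle_of_paths[OF geo b(1)] a b x'y k edge_sym by (simp add: a'_def)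
  then show ?thesis by force
qed

end

locale bridged_graph = connected_simple_graph +
  assumes bridged: "bridged V E"
begin

lemma triangle_cond_below_Suc:
  assumes TC: "triangle_cond_below n" and CC: "ball_convex_below n"
  shows "triangle_cond_below (Suc n)"
  unfolding triangle_cond_below_def
proof (intro allI impI)
  fix u p q
  assume h: "u \<in> V" "E p q" "d u p = d u q" "1 \<le> d u p" "2 * d u p + 1 < Suc n"
  show "\<exists>z\<in>V. E z p \<and> E z q \<and> Suc (d u z) = d u p"
  proof (cases "2 * d u p + 1 < n")
    case True
    then show ?thesis using triangle_condD[OF TC h(1,2) refl h(3)[symmetric] h(4)] by blast
  next
    case False
    then have n: "n = 2 * d u p + 1" using h(5) by linarith
    show ?thesis
    proof (cases "d u p = 1")
      case True
      then have "E u p" "E u q"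
        using edge_if_dist_1[OF h(1)] edge_in_V[OF h(2)] h(3) by auto
      then show ?thesis using h(1) True by auto
    next
      case False
      show ?thesis
      proof (rule ccontr)
        assume no_apex: "\<not> (\<exists>z\<in>V. E z p \<and> E z q \<and> Suc (d u z) = d u p)"
        have "2 \<le> d u p" using h(4) False by simp
        then interpret triangle_violation V E n u p q "d u p"
          using TC CC h(1,2) h(3)[symmetric] n no_apex by unfold_locales simp_all
        obtain cs where "isometric_cycle V E cs" "length cs = n"
          using isometric_cycle_of_violation by blast
        then show False using bridged n \<open>2 \<le> d u p\<close> unfolding bridged_def by fastforce
      qed
    qed
  qed
qed

lemma ball_convex_below_Suc:
  assumes TC: "triangle_cond_below n" and CC: "ball_convex_below n"
  shows "ball_convex_below (Suc n)"
  unfolding ball_convex_below_def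
proof (intro allI impI)
  fix u p q y
  assume h: "u \<in> V" "E p y" "E q y" "d u p = d u q" "d u y = Suc (d u p)" "2 * d u p + 2 < Suc n"
  show "p = q \<or> E p q"
  proof (cases "2 * d u p + 2 < n")
    case True
    then show ?thesis using ball_convexD[OF CC h(1-3) refl h(4)[symmetric] h(5)] by blast
  next
    case False
    then have n: "n = 2 * d u p + 2" using h(6) by linarith
    show ?thesis
    proof (cases "d u p = 0")
      case True
      then show ?thesis using dist_eq_0[OF h(1)] h(2-4) edge_in_V by metis
    next
      case False
      show ?thesis
      proof (rule ccontr)
        assume apart: "\<not> (p = q \<or> E p q)"
        have no_pentagon: "length cs \<noteq> 5" if "isometric_cycle V E cs" for cs
          using bridged that unfolding bridged_def by fastforce
        have "1 \<le> d u p" using False by simp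
        then interpret sphere_edge V E n u p y "d u p"
          using TC CC no_pentagon h(1,2,5) n by unfold_locales simp_all
        have "rival q" unfolding rival_def using h apart by auto
        then obtain cs where "isometric_cycle V E cs" "length cs = n"
          using isometric_cycle_of_rival by blast
        then show False using bridged n \<open>d u p \<noteq> 0\<close> unfolding bridged_def by fastforce
      qed
    qed
  qed
qed

lemma local_conditions_below: "triangle_cond_below n \<and> ball_convex_below n"
proof (induction n)
  case 0
  show ?case by (simp add: triangle_cond_below_def ball_convex_below_def)
next
  case (Suc n)
  then show ?case using triangle_cond_below_Suc ball_convex_below_Suc by blast
qed

lemma triangle_condition:
  assumes "u \<in> V" "E p q" "d u p = d u q" "1 \<le> d u p"
  shows "\<exists>z\<in>V. E z p \<and> E z q \<and> Suc (d u z) = d u p"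
proof -
  have "triangle_cond_below (2 * d u p + 2)" using local_conditions_below by blast
  from triangle_condD[OF this assms(1,2) refl assms(3)[symmetric] assms(4)] show ?thesis by simp
qed

lemma ball_convexity:
  assumes "u \<in> V" "E p y" "E q y" "d u p = d u q" "d u y = Suc (d u p)"
  shows "p = q \<or> E p q"
proof -
  have "ball_convex_below (2 * d u p + 3)" using local_conditions_below by blast
  from ball_convexD[OF this assms(1-3) refl assms(4)[symmetric] assms(5)] show ?thesis by simp
qed

lemma triangle_diamond_condition: "TDC V E"
  unfolding TDC_def
proof (intro ballI impI)
  fix u v w
  assume V: "u \<in> V" "v \<in> V" "w \<in> V" and h: "1 = d v w \<and> d v w < d u v \<and> d u v = d u w"
  then have vw: "E v w" and uv: "2 \<le> d u v" and uw: "d u v = d u w"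
    using edge_if_dist_1 by auto
  obtain z where z: "z \<in> V" "E z v" "E z w" "Suc (d u z) = d u v"
    using triangle_condition[OF V(1) vw uw] uv by auto
  have adj: "E z x" if "x \<in> V" "d x t = 1" "d u x = d u t - 1" "x \<noteq> z" "t \<in> {v, w}" for x t
  proof -
    have "E x t" "E z t" "d u x = d u z" "d u t = Suc (d u x)"
      using edge_if_dist_1 that V z uw by auto
    then have "x = z \<or> E x z" using ball_convexity[OF V(1)] by blast
    then show ?thesis using that(4) edge_sym by blast
  qed
  show "\<exists>z\<in>V. E z v \<and> E z w \<and> d u z = d u v - 1 \<and>
      (\<forall>x\<in>V. d x v = 1 \<and> d u x = d u v - 1 \<and> x \<noteq> z \<longrightarrow> E z x) \<and>
      (\<forall>y\<in>V. d y w = 1 \<and> d u y = d u w - 1 \<and> y \<noteq> z \<longrightarrow> E z y)"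
  proof (intro bexI[OF _ z(1)] conjI ballI impI)
    show "E z v" "E z w" "d u z = d u v - 1" using z by auto
  next
    fix x assume "x \<in> V" "d x v = 1 \<and> d u x = d u v - 1 \<and> x \<noteq> z"
    then show "E z x" using adj[of x v] by blast
  next
    fix x assume "x \<in> V" "d x w = 1 \<and> d u x = d u w - 1 \<and> x \<noteq> z"
    then show "E z x" using adj[of x w] uw by auto
  qed
qed

lemma quadrangle_condition: "QC V E"
  unfolding QC_def
proof (intro ballI impI)
  fix u v w y
  assume V: "u \<in> V" "v \<in> V" "w \<in> V" "y \<in> V" and h: "d v y = 1 \<and> d w y = 1 \<and> 2 = d v w \<and>
    d v w \<le> d u v \<and> d u v = d u w \<and> d u w = d u y - 1"
  then have "E v y" "E w y" "d u y = Suc (d u v)" using edge_if_dist_1 by auto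
  then have "v = w \<or> E v w" using ball_convexity[OF V(1)] h by simp
  moreover have "v \<noteq> w" "\<not> E v w" using h V(2) dist_edge by auto
  ultimately show "\<exists>z\<in>V. E z v \<and> E z w \<and> d u z = d u v - 1" by blast
qed

end

theorem lemma1:
  fixes V :: "'a set" and E :: "'a \<Rightarrow> 'a \<Rightarrow> bool"
  assumes "simple_graph V E" and "connected_graph V E" and "bridged V E"
  shows "TDC V E \<and> diamond_weakly_modular V E"
proof -
  interpret bridged_graph V E using assms by unfold_locales
  show ?thesis
    using triangle_diamond_condition quadrangle_condition
    unfolding diamond_weakly_modular_def by blast
qed

end
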